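(* Let $R$ be a skew field. For $a_1,a_2,a_3,a_4\in R^*$ put $A_i=a_ia_{i+1}a_{i+2}a_{i+3}$ (indices mod $4$) and assume $1+A_i\neq0$ for all $i$. Define $\mu(a_1,a_2,a_3,a_4)=(b_1,b_2,b_3,b_4)$ by $$b_1=(1+A_3^{-1})a_3,\quad b_2=(1+A_4)^{-1}a_4,\quad b_3=(1+A_1^{-1})a_1,\quad b_4=(1+A_2)^{-1}a_2.$$ Then the square of this two by two transformation is the identity, in the sense that $\mu(b_2,b_3,b_4,b_1)=(a_2,a_3,a_4,a_1)$.
   Context: The transformation $\mu$ describes the change of $\mathcal A$-coordinates $a_i$ on the four internal edges of a bipartite ribbon graph under a two by two move; the relabeling $(b_2,b_3,b_4,b_1)$ corresponds to the rotation of the picture identifying the new graph with the old one. *)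

theory Defs
  imports Main
begin

definition mu :: "'a::division_ring \<times> 'a \<times> 'a \<times> 'a \<Rightarrow> 'a \<times> 'a \<times> 'a \<times> 'a" where
  "mu = (\<lambda>(a1, a2, a3, a4).
     (let A1 = a1 * a2 * a3 * a4;
          A2 = a2 * a3 * a4 * a1;
          A3 = a3 * a4 * a1 * a2;
          A4 = a4 * a1 * a2 * a3
      in ((1 + inverse A3) * a3,
          inverse (1 + A4) * a4,
          (1 + inverse A1) * a1,
          inverse (1 + A2) * a2)))"

end

theory Submission
  imports Defs
begin

text \<open>Rewriting \<open>b1 = (a4 a1 a2)\<^sup>-\<^sup>1 (1 + A4)\<close> and \<open>b3 = (a2 a3 a4)\<^sup>-\<^sup>1 (1 + A2)\<close>
  gives \<open>b1 b2 = (a1 a2)\<^sup>-\<^sup>1\<close> and \<open>b3 b4 = (a3 a4)\<^sup>-\<^sup>1\<close>. Hence the cyclic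
  products of \<open>(b2, b3, b4, b1)\<close> are \<open>A4\<^sup>-\<^sup>1, A1\<^sup>-\<^sup>1, A2\<^sup>-\<^sup>1, A3\<^sup>-\<^sup>1\<close>; two of
  them arise as the conjugate of \<open>A\<^sup>-\<^sup>1\<close> by \<open>1 + A\<close>, which commutes with \<open>A\<close>.
  Feeding these products into the second move, each factor \<open>1 + A\<close> or \<open>1 + A\<^sup>-\<^sup>1\<close>
  created by the first move meets its own inverse and cancels.\<close>

lemma mu_apply:
  "mu (a1, a2, a3, a4) =
    ((1 + inverse (a3 * a4 * a1 * a2)) * a3,
     inverse (1 + a4 * a1 * a2 * a3) * a4,
     (1 + inverse (a1 * a2 * a3 * a4)) * a1,
     inverse (1 + a2 * a3 * a4 * a1) * a2)"
  by (simp add: mu_def)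

lemma one_plus_inverse_mult:
  fixes p q :: "'a::division_ring"
  assumes "p \<noteq> 0" "q \<noteq> 0"
  shows "(1 + inverse (q * p)) * q = inverse p * (1 + p * q)"
proof -
  have "inverse p * (p * q) = q"
    using assms by (simp add: mult.assoc[symmetric])
  then show ?thesis
    using assms by (simp add: distrib_left distrib_right nonzero_inverse_mult_distrib mult.assoc)
qed

lemma inverse_one_plus_conj:
  fixes x :: "'a::division_ring"
  assumes "1 + x \<noteq> 0"
  shows "inverse (1 + x) * (inverse x * (1 + x)) = inverse x"
proof -
  have "inverse x * (1 + x) = (1 + x) * inverse x"
    by (cases "x = 0") (simp_all add: distrib_left distrib_right)
  then show ?thesis
    using assms by (simp add: mult.assoc[symmetric])
qed

lemma one_plus_inverse_nonzero:
  fixes x :: "'a::division_ring"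
  assumes "x \<noteq> 0" "1 + x \<noteq> 0"
  shows "1 + inverse x \<noteq> 0"
proof -
  have "1 + inverse x = inverse x * (1 + x)"
    using assms by (simp add: distrib_left)
  then show ?thesis
    using assms by simp
qed

lemma mu_factored:
  fixes a1 a2 a3 a4 :: "'a::division_ring"
  assumes "a1 \<noteq> 0" "a2 \<noteq> 0" "a3 \<noteq> 0" "a4 \<noteq> 0"
  shows "mu (a1, a2, a3, a4) =
    (inverse (a4 * a1 * a2) * (1 + a4 * a1 * a2 * a3),
     inverse (1 + a4 * a1 * a2 * a3) * a4,
     inverse (a2 * a3 * a4) * (1 + a2 * a3 * a4 * a1),
     inverse (1 + a2 * a3 * a4 * a1) * a2)"
proof -
  have "(1 + inverse (a3 * a4 * a1 * a2)) * a3 = inverse (a4 * a1 * a2) * (1 + a4 * a1 * a2 * a3)"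
    using one_plus_inverse_mult[of "a4 * a1 * a2" a3] assms by (simp add: mult.assoc)
  moreover have "(1 + inverse (a1 * a2 * a3 * a4)) * a1 = inverse (a2 * a3 * a4) * (1 + a2 * a3 * a4 * a1)"
    using one_plus_inverse_mult[of "a2 * a3 * a4" a1] assms by (simp add: mult.assoc)
  ultimately show ?thesis
    by (simp add: mu_apply)
qed

lemma mu_cyclic_products:
  fixes a1 a2 a3 a4 b1 b2 b3 b4 :: "'a::division_ring"
  assumes nonzero: "a1 \<noteq> 0" "a2 \<noteq> 0" "a3 \<noteq> 0" "a4 \<noteq> 0"
    and "1 + a2 * a3 * a4 * a1 \<noteq> 0" "1 + a4 * a1 * a2 * a3 \<noteq> 0"
    and "mu (a1, a2, a3, a4) = (b1, b2, b3, b4)"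
  shows "b2 * b3 * b4 * b1 = inverse (a4 * a1 * a2 * a3)"
    and "b3 * b4 * b1 * b2 = inverse (a1 * a2 * a3 * a4)"
    and "b4 * b1 * b2 * b3 = inverse (a2 * a3 * a4 * a1)"
    and "b1 * b2 * b3 * b4 = inverse (a3 * a4 * a1 * a2)"
proof -
  have b: "b1 = inverse (a4 * a1 * a2) * (1 + a4 * a1 * a2 * a3)"
    "b2 = inverse (1 + a4 * a1 * a2 * a3) * a4"
    "b3 = inverse (a2 * a3 * a4) * (1 + a2 * a3 * a4 * a1)"
    "b4 = inverse (1 + a2 * a3 * a4 * a1) * a2"
    using assms by (simp_all add: mu_factored)
  have cancel: "x * (inverse x * y) = y" if "x \<noteq> 0" for x y :: 'a
    using that by (simp add: mult.assoc[symmetric])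
  have b12: "b1 * b2 = inverse (a1 * a2)" and b34: "b3 * b4 = inverse (a3 * a4)"
    using assms by (simp_all add: b cancel nonzero_inverse_mult_distrib mult.assoc)
  show "b3 * b4 * b1 * b2 = inverse (a1 * a2 * a3 * a4)"
    and "b1 * b2 * b3 * b4 = inverse (a3 * a4 * a1 * a2)"
    using nonzero
    by (simp_all add: mult.assoc[of b3 b4] mult.assoc[of b1 b2] b12 b34
        nonzero_inverse_mult_distrib mult.assoc)
  show "b2 * b3 * b4 * b1 = inverse (a4 * a1 * a2 * a3)"
    using inverse_one_plus_conj[of "a4 * a1 * a2 * a3"] assms
    by (simp add: b(1,2) b34 cancel mult.assoc nonzero_inverse_mult_distrib)
  show "b4 * b1 * b2 * b3 = inverse (a2 * a3 * a4 * a1)"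
    using inverse_one_plus_conj[of "a2 * a3 * a4 * a1"] assms
    by (simp add: b(3,4) b12 cancel mult.assoc nonzero_inverse_mult_distrib)
qed

theorem lemma4p3:
  fixes a1 a2 a3 a4 b1 b2 b3 b4 :: "'a::division_ring"
  assumes "a1 \<noteq> 0" "a2 \<noteq> 0" "a3 \<noteq> 0" "a4 \<noteq> 0"
    and "1 + a1 * a2 * a3 * a4 \<noteq> 0"
    and "1 + a2 * a3 * a4 * a1 \<noteq> 0"
    and "1 + a3 * a4 * a1 * a2 \<noteq> 0"
    and "1 + a4 * a1 * a2 * a3 \<noteq> 0"
    and "mu (a1, a2, a3, a4) = (b1, b2, b3, b4)"
  shows "mu (b2, b3, b4, b1) = (a2, a3, a4, a1)"
proof -
  have b: "b1 = (1 + inverse (a3 * a4 * a1 * a2)) * a3"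
    "b2 = inverse (1 + a4 * a1 * a2 * a3) * a4"
    "b3 = (1 + inverse (a1 * a2 * a3 * a4)) * a1"
    "b4 = inverse (1 + a2 * a3 * a4 * a1) * a2"
    using assms(9) by (simp_all add: mu_apply)
  have "1 + inverse (a1 * a2 * a3 * a4) \<noteq> 0" "1 + inverse (a3 * a4 * a1 * a2) \<noteq> 0"
    using assms(1-7) by (simp_all add: one_plus_inverse_nonzero)
  then show ?thesis
    using mu_cyclic_products[OF assms(1-4,6,8,9)] assms(6,8)
    by (simp add: mu_apply b mult.assoc[symmetric])
qed

end
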